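(* Let $f:\mathbb{R}^\ell\times\mathbb{R}^m\to\mathbb{R}^\ell$ be $C^1$, let $\Lambda$ be a parameter shift with limits $\lambda_\pm$, and let $X$ define a stable path with endpoints $X_\pm$. For $r>0$ let $\{x_n^r\}_{n\in\mathbb{Z}}$ be the unique solution of $x_{n+1}=f(x_n,\Lambda(rn))$ with $\lim_{n\to-\infty}x_n^r=X_-$. Let $Z_1=f(X_-,\Lambda(0))$ and $Z_2=f(Z_1,\lambda_+)$. If $Z_2\in\mathbb{B}(Y_+,\lambda_+)$ for some attracting fixed point $Y_+$ of $f(\cdot,\lambda_+)$, then there exists $r_1>0$ such that for all $r>r_1$, $x_n^r\to Y_+$ as $n\to\infty$.
   Context: A parameter shift is a $C^1$ function $\Lambda:\mathbb{R}\to\mathbb{R}^m$ with $\lim_{s\to\pm\infty}\Lambda(s)=\lambda_\pm$ and $\lim_{s\to\pm\infty}\Lambda'(s)=0$. A stable path is given by $X:\mathbb{R}\to\mathbb{R}^\ell$ such that: $X(s)$ is a fixed point of $f(\cdot,\Lambda(s))$ for every $s$; $\{(s,X(s))\}$ is a connected curve; the limits $X_\pm=\lim_{s\to\pm\infty}X(s)$ exist and are fixed points of $f(\cdot,\lambda_\pm)$; and the spectral radius of $D_xf(X(s),\Lambda(s))$ is $<1$ for all $s\in\mathbb{R}\cup\{\pm\infty\}$ (with $X(\pm\infty)=X_\pm$, $\Lambda(\pm\infty)=\lambda_\pm$). It is known that for each $r>0$ there is a unique solution with $x_n^r\to X_-$ as $n\to-\infty$. For a fixed point $p$ of $f(\cdot,\lambda)$,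 the basin of attraction $\mathbb{B}(p,\lambda)$ is the set of $x\in\mathbb{R}^\ell$ whose iterates under $f(\cdot,\lambda)$ converge to $p$. *)

theory Defs
  imports "HOL-Analysis.Analysis"
begin

text \<open>Complex eigenvalues of a real linear map L on a Euclidean space, i.e. eigenvalues
  of its complexification: mu is an eigenvalue iff there is a nonzero complex vector
  u + i w with L u + i L w = mu (u + i w).\<close>
definition complex_eigenvalue :: "('a::euclidean_space \<Rightarrow> 'a) \<Rightarrow> complex \<Rightarrow> bool" where
  "complex_eigenvalue L \<mu> \<longleftrightarrow>
     (\<exists>u w. (u \<noteq> 0 \<or> w \<noteq> 0) \<and>
        L u = Re \<mu> *\<^sub>R u - Im \<mu> *\<^sub>R w \<and>
        L w = Im \<mu> *\<^sub>R u + Re \<mu> *\<^sub>R w)"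

definition spectral_radius :: "('a::euclidean_space \<Rightarrow> 'a) \<Rightarrow> real" where
  "spectral_radius L = Sup (cmod ` {\<mu>. complex_eigenvalue L \<mu>})"

definition C1_map :: "('a::euclidean_space \<times> 'b::euclidean_space \<Rightarrow> 'a) \<Rightarrow> bool" where
  "C1_map f \<longleftrightarrow> (\<exists>f'. (\<forall>z. (f has_derivative blinfun_apply (f' z)) (at z)) \<and> continuous_on UNIV f')"

definition Dx :: "('a::euclidean_space \<times> 'b::euclidean_space \<Rightarrow> 'a) \<Rightarrow> 'a \<Rightarrow> 'b \<Rightarrow> ('a \<Rightarrow> 'a)" where
  "Dx f x l = (\<lambda>v. frechet_derivative f (at (x, l)) (v, 0))"

definition parameter_shift :: "(real \<Rightarrow> 'b::euclidean_space) \<Rightarrow> 'b \<Rightarrow> 'b \<Rightarrow> bool" where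
  "parameter_shift \<Lambda> lm lp \<longleftrightarrow>
     (\<exists>\<Lambda>'. (\<forall>s. (\<Lambda> has_vector_derivative \<Lambda>' s) (at s)) \<and> continuous_on UNIV \<Lambda>' \<and>
        (\<Lambda>' \<longlongrightarrow> 0) at_bot \<and> (\<Lambda>' \<longlongrightarrow> 0) at_top) \<and>
     (\<Lambda> \<longlongrightarrow> lm) at_bot \<and> (\<Lambda> \<longlongrightarrow> lp) at_top"

definition stable_path ::
  "('a::euclidean_space \<times> 'b::euclidean_space \<Rightarrow> 'a) \<Rightarrow> (real \<Rightarrow> 'b) \<Rightarrow> 'b \<Rightarrow> 'b \<Rightarrow>
   (real \<Rightarrow> 'a) \<Rightarrow> 'a \<Rightarrow> 'a \<Rightarrow> bool" where
  "stable_path f \<Lambda> lm lp X Xm Xp \<longleftrightarrow>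
     (\<forall>s. f (X s, \<Lambda> s) = X s) \<and>
     connected (range (\<lambda>s. (s, X s))) \<and>
     (X \<longlongrightarrow> Xm) at_bot \<and> (X \<longlongrightarrow> Xp) at_top \<and>
     f (Xm, lm) = Xm \<and> f (Xp, lp) = Xp \<and>
     (\<forall>s. spectral_radius (Dx f (X s) (\<Lambda> s)) < 1) \<and>
     spectral_radius (Dx f Xm lm) < 1 \<and> spectral_radius (Dx f Xp lp) < 1"

definition basin :: "('a::euclidean_space \<times> 'b \<Rightarrow> 'a) \<Rightarrow> 'a \<Rightarrow> 'b \<Rightarrow> 'a set" where
  "basin f p l = {x. (\<lambda>n. ((\<lambda>y. f (y, l)) ^^ n) x) \<longlonglongrightarrow> p}"

definition attracting_fixed_point :: "('a::euclidean_space \<times> 'b::euclidean_space \<Rightarrow> 'a) \<Rightarrow> 'a \<Rightarrow> 'b \<Rightarrow> bool" where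
  "attracting_fixed_point f p l \<longleftrightarrow> f (p, l) = p \<and> spectral_radius (Dx f p l) < 1"

end

theory Submission
  imports Defs "Jordan_Normal_Form.Spectral_Radius"
begin

text \<open>
  For large r the parameter \<Lambda> (r n) is uniformly close to lm for all n \<le> -1, uniformly
  close to lp for all n \<ge> 1, and tends to lp.  Linear stability of a fixed point p of
  f (., l0) gives an adapted norm in which every f (., l) with l near l0 contracts near p; so
  small balls of that norm are forward invariant, and orbits inside them converge to p once the
  parameter converges to l0.  At Xm this keeps the solution near Xm up to time 0, so
  x 1 = f (x 0, \<Lambda> 0) lies near Z1 = f (Xm, \<Lambda> 0).  As f (Z1, lp) = Z2 is in the basin of
  Yp, the orbit of Z1 under f (., lp) enters such an invariant neighbourhood of Yp after finitely
  many steps; by continuous dependence so does the perturbed orbit from x 1, which therefore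
  converges to Yp.
\<close>

section \<open>Powers of a linear map of spectral radius less than one\<close>

lemma linear_funpow:
  fixes L :: "'a::real_vector \<Rightarrow> 'a"
  assumes "linear L"
  shows "linear (L ^^ k)"
proof (induction k)
  case 0
  then show ?case by (simp add: linear_iff)
next
  case (Suc k)
  then show ?case unfolding funpow_Suc_right by (intro linear_compose assms)
qed

lemma sum_basis_list:
  fixes bs :: "'a::euclidean_space list"
  assumes "distinct bs" "set bs = Basis"
  shows "(\<Sum>i<length bs. g (bs ! i)) = (\<Sum>b\<in>Basis. g b)"
proof -
  have "bij_betw ((!) bs) {..<length bs} Basis"
    using assms by (intro bij_betw_nth) auto
  then show ?thesis by (rule sum.reindex_bij_betw)
qed

lemma inner_basis_list:
  fixes bs :: "'a::euclidean_space list"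
  assumes "distinct bs" "set bs = Basis" "i < length bs" "j < length bs"
  shows "inner (bs ! j) (bs ! i) = (if i = j then 1 else 0)"
proof -
  have "bs ! i \<in> Basis" "bs ! j \<in> Basis" using assms nth_mem by blast+
  moreover have "bs ! j = bs ! i \<longleftrightarrow> i = j" using assms nth_eq_iff_index_eq by blast
  ultimately show ?thesis by (simp add: inner_Basis)
qed

lemma basis_list_expansion:
  fixes bs :: "'a::euclidean_space list"
  assumes "distinct bs" "set bs = Basis"
  shows "(\<Sum>i<length bs. inner x (bs ! i) *\<^sub>R bs ! i) = x"
  using sum_basis_list[OF assms, of "\<lambda>b. inner x b *\<^sub>R b"] euclidean_representation[of x]
  by simp

lemma inner_basis_list_combination:
  fixes bs :: "'a::euclidean_space list"
  assumes "distinct bs" "set bs = Basis" "i < length bs"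
  shows "inner (\<Sum>j<length bs. c j *\<^sub>R bs ! j) (bs ! i) = c i"
proof -
  have "inner (\<Sum>j<length bs. c j *\<^sub>R bs ! j) (bs ! i) = (\<Sum>j<length bs. c j * inner (bs ! j) (bs ! i))"
    by (simp add: inner_sum_left)
  also have "\<dots> = (\<Sum>j<length bs. if j = i then c j else 0)"
    using inner_basis_list[OF assms(1,2) assms(3)] by (intro sum.cong) auto
  also have "\<dots> = c i" using assms(3) by simp
  finally show ?thesis .
qed

lemma basis_list_eqI:
  fixes bs :: "'a::euclidean_space list"
  assumes "distinct bs" "set bs = Basis"
    and "\<And>i. i < length bs \<Longrightarrow> inner x (bs ! i) = inner y (bs ! i)"
  shows "x = y"
proof (rule euclidean_eqI)
  fix b :: 'a
  assume "b \<in> Basis"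
  then obtain i where "i < length bs" "b = bs ! i"
    using assms(2) in_set_conv_nth[of b bs] by auto
  then show "inner x b = inner y b" using assms(3) by simp
qed

definition basis_matrix :: "'a::euclidean_space list \<Rightarrow> ('a \<Rightarrow> 'a) \<Rightarrow> complex mat" where
  "basis_matrix bs L =
     Matrix.mat (length bs) (length bs) (\<lambda>(i, j). complex_of_real (inner (L (bs ! j)) (bs ! i)))"

lemma basis_matrix_carrier: "basis_matrix bs L \<in> carrier_mat (length bs) (length bs)"
  by (simp add: basis_matrix_def)

lemma basis_matrix_power:
  fixes bs :: "'a::euclidean_space list"
  assumes bs: "distinct bs" "set bs = Basis" and "linear L"
    and "i < length bs" "j < length bs"
  shows "(basis_matrix bs L ^\<^sub>m k) $$ (i, j) = complex_of_real (inner ((L ^^ k) (bs ! j)) (bs ! i))"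
  using assms(4,5)
proof (induction k arbitrary: i j)
  case 0
  then show ?case using basis_matrix_carrier[of bs L] inner_basis_list[OF bs, of i j] by simp
next
  case (Suc k)
  define n where "n = length bs"
  define M where "M = basis_matrix bs L"
  have M: "M \<in> carrier_mat n n" by (simp add: M_def n_def basis_matrix_carrier)
  have "(M ^\<^sub>m Suc k) $$ (i, j) = (\<Sum>l = 0..<n. (M ^\<^sub>m k) $$ (i, l) * M $$ (l, j))"
    using Suc.prems M pow_carrier_mat[OF M] by (simp add: scalar_prod_def n_def)
  also have "\<dots> = complex_of_real (\<Sum>l<n. inner (L (bs ! j)) (bs ! l) * inner ((L ^^ k) (bs ! l)) (bs ! i))"
    using Suc.IH Suc.prems by (simp add: M_def basis_matrix_def n_def atLeast0LessThan mult.commute)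
  also have "(\<Sum>l<n. inner (L (bs ! j)) (bs ! l) * inner ((L ^^ k) (bs ! l)) (bs ! i))
      = inner ((L ^^ k) (\<Sum>l<n. inner (L (bs ! j)) (bs ! l) *\<^sub>R bs ! l)) (bs ! i)"
    using linear_funpow[OF assms(3), of k] by (simp add: linear_sum linear_scale inner_sum_left)
  also have "(\<Sum>l<n. inner (L (bs ! j)) (bs ! l) *\<^sub>R bs ! l) = L (bs ! j)"
    using basis_list_expansion[OF bs] by (simp add: n_def)
  finally show ?case by (simp add: M_def funpow_swap1)
qed

text \<open>A complex eigenvector of the matrix of L splits into the real and imaginary parts u, w
  required by complex_eigenvalue.\<close>
lemma complex_eigenvalue_if_eigenvalue_basis_matrix:
  fixes bs :: "'a::euclidean_space list"
  assumes bs: "distinct bs" "set bs = Basis" and lin: "linear L"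
    and "eigenvalue (basis_matrix bs L) \<mu>"
  shows "complex_eigenvalue L \<mu>"
proof -
  define n where "n = length bs"
  have M: "basis_matrix bs L \<in> carrier_mat n n" by (simp add: basis_matrix_carrier n_def)
  obtain v where v: "v \<in> carrier_vec n" "v \<noteq> 0\<^sub>v n" "basis_matrix bs L *\<^sub>v v = \<mu> \<cdot>\<^sub>v v"
    using assms(4) M unfolding eigenvalue_def eigenvector_def by auto
  define a where "a l = Re (vec_index v l)" for l
  define b where "b l = Im (vec_index v l)" for l
  define u where "u = (\<Sum>l<n. a l *\<^sub>R bs ! l)"
  define w where "w = (\<Sum>l<n. b l *\<^sub>R bs ! l)"
  have u: "inner u (bs ! i) = a i" and w: "inner w (bs ! i) = b i" if "i < n" for i
    using inner_basis_list_combination[OF bs] that by (simp_all add: u_def w_def n_def)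
  have eigen_row: "(\<Sum>l<n. complex_of_real (inner (L (bs ! l)) (bs ! i)) * vec_index v l)
      = \<mu> * vec_index v i" if "i < n" for i
  proof -
    have "(\<Sum>l<n. complex_of_real (inner (L (bs ! l)) (bs ! i)) * vec_index v l)
        = vec_index (basis_matrix bs L *\<^sub>v v) i"
      using that v(1) by (simp add: basis_matrix_def n_def scalar_prod_def atLeast0LessThan)
    then show ?thesis using v(1,3) that by simp
  qed
  have Lu: "inner (L u) (bs ! i) = (\<Sum>l<n. a l * inner (L (bs ! l)) (bs ! i))"
    and Lw: "inner (L w) (bs ! i) = (\<Sum>l<n. b l * inner (L (bs ! l)) (bs ! i))" for i
    by (simp_all add: u_def w_def linear_sum[OF lin] linear_scale[OF lin] inner_sum_left)
  have Re: "(\<Sum>l<n. a l * inner (L (bs ! l)) (bs ! i)) = Re \<mu> * a i - Im \<mu> * b i"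
    and Im: "(\<Sum>l<n. b l * inner (L (bs ! l)) (bs ! i)) = Im \<mu> * a i + Re \<mu> * b i"
    if "i < n" for i
    using arg_cong[OF eigen_row[OF that], of Re] arg_cong[OF eigen_row[OF that], of Im]
    by (simp_all add: a_def b_def Re_sum Im_sum mult.commute)
  have "L u = Re \<mu> *\<^sub>R u - Im \<mu> *\<^sub>R w"
  proof (rule basis_list_eqI[OF bs])
    fix i assume "i < length bs"
    then show "inner (L u) (bs ! i) = inner (Re \<mu> *\<^sub>R u - Im \<mu> *\<^sub>R w) (bs ! i)"
      using Lu Re u w by (simp add: inner_diff_left n_def)
  qed
  moreover have "L w = Im \<mu> *\<^sub>R u + Re \<mu> *\<^sub>R w"
  proof (rule basis_list_eqI[OF bs])
    fix i assume "i < length bs"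
    then show "inner (L w) (bs ! i) = inner (Im \<mu> *\<^sub>R u + Re \<mu> *\<^sub>R w) (bs ! i)"
      using Lw Im u w by (simp add: inner_add_left n_def)
  qed
  moreover have "u \<noteq> 0 \<or> w \<noteq> 0"
  proof -
    obtain i where i: "i < n" "vec_index v i \<noteq> 0"
      using v(1,2) by (metis carrier_vecD eq_vecI index_zero_vec(1,2))
    then have "a i \<noteq> 0 \<or> b i \<noteq> 0" using complex_eqI by (auto simp: a_def b_def)
    then show ?thesis using u[OF i(1)] w[OF i(1)] by auto
  qed
  ultimately show ?thesis unfolding complex_eigenvalue_def by blast
qed

lemma norm_le_basis_list_entries:
  fixes bs :: "'a::euclidean_space list" and c :: real
  assumes bs: "distinct bs" "set bs = Basis" and "linear T"
    and entries: "\<And>i j. i < length bs \<Longrightarrow> j < length bs \<Longrightarrow> \<bar>inner (T (bs ! j)) (bs ! i)\<bar> \<le> c"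
  shows "norm (T x) \<le> (length bs)\<^sup>2 * c * norm x"
proof -
  define n where "n = length bs"
  have column: "norm (T (bs ! j)) \<le> n * c" if "j < n" for j
  proof -
    have "norm (T (bs ! j)) \<le> (\<Sum>b\<in>Basis. \<bar>inner (T (bs ! j)) b\<bar>)" by (rule norm_le_l1)
    also have "\<dots> = (\<Sum>i<n. \<bar>inner (T (bs ! j)) (bs ! i)\<bar>)"
      using sum_basis_list[OF bs, of "\<lambda>b. \<bar>inner (T (bs ! j)) b\<bar>"] by (simp add: n_def)
    also have "\<dots> \<le> (\<Sum>i<n. c)" using entries that by (intro sum_mono) (auto simp: n_def)
    finally show ?thesis by simp
  qed
  have expansion: "T x = (\<Sum>j<n. inner x (bs ! j) *\<^sub>R T (bs ! j))"
    using basis_list_expansion[OF bs, of x] linear_sum[OF \<open>linear T\<close>] linear_scale[OF \<open>linear T\<close>]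
    by (metis (no_types, lifting) n_def sum.cong)
  have "norm (T x) \<le> (\<Sum>j<n. norm (inner x (bs ! j) *\<^sub>R T (bs ! j)))"
    unfolding expansion by (rule norm_sum)
  also have "\<dots> \<le> (\<Sum>j<n. norm x * (n * c))"
  proof (intro sum_mono)
    fix j assume "j \<in> {..<n}"
    then have "\<bar>inner x (bs ! j)\<bar> \<le> norm x" "norm (T (bs ! j)) \<le> n * c"
      using Basis_le_norm[of "bs ! j" x] bs nth_mem[of j bs] column by (auto simp: n_def)
    then show "norm (inner x (bs ! j) *\<^sub>R T (bs ! j)) \<le> norm x * (n * c)"
      by (simp add: mult_mono)
  qed
  also have "\<dots> = n\<^sup>2 * c * norm x" by (simp add: power2_eq_square algebra_simps)
  finally show ?thesis by (simp add: n_def)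
qed

lemma linear_powers_bounded:
  fixes L :: "'a::euclidean_space \<Rightarrow> 'a"
  assumes lin: "linear L" and eigenvalues: "\<And>\<mu>. complex_eigenvalue L \<mu> \<Longrightarrow> cmod \<mu> < 1"
  obtains C where "\<And>k x. norm ((L ^^ k) x) \<le> C * norm x"
proof -
  obtain bs :: "'a list" where bs: "distinct bs" "set bs = Basis"
    using finite_distinct_list[OF finite_Basis] by blast
  define n where "n = length bs"
  define M where "M = basis_matrix bs L"
  have M: "M \<in> carrier_mat n n" by (simp add: M_def n_def basis_matrix_carrier)
  have "n > 0" using bs by (simp add: n_def distinct_card[symmetric])
  then obtain \<mu> where "\<mu> \<in> spectrum M" "Spectral_Radius.spectral_radius M = cmod \<mu>"
    using spectral_radius_mem_max(1)[OF M] by auto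
  then have "Spectral_Radius.spectral_radius M < 1"
    using eigenvalues complex_eigenvalue_if_eigenvalue_basis_matrix[OF bs lin]
    by (auto simp: spectrum_def M_def)
  then obtain c where c: "\<And>k. norm_bound (M ^\<^sub>m k) c"
    using spectral_radius_jnf_norm_bound_less_1_upper_triangular[OF M] by blast
  have "\<bar>inner ((L ^^ k) (bs ! j)) (bs ! i)\<bar> \<le> c" if "i < n" "j < n" for k i j
    using c[of k] that M basis_matrix_power[OF bs lin, of i j k]
    unfolding norm_bound_def by (metis M_def n_def norm_of_real pow_carrier_mat carrier_matD)
  then have "norm ((L ^^ k) x) \<le> n\<^sup>2 * c * norm x" for k x
    using norm_le_basis_list_entries[OF bs linear_funpow[OF lin]] by (simp add: n_def)
  then show ?thesis using that by blast
qed

lemma norm_rotation_sum_squares: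
  fixes u w :: "'a::real_inner"
  shows "(norm (a *\<^sub>R u - b *\<^sub>R w))\<^sup>2 + (norm (b *\<^sub>R u + a *\<^sub>R w))\<^sup>2
     = (a\<^sup>2 + b\<^sup>2) * ((norm u)\<^sup>2 + (norm w)\<^sup>2)"
proof -
  have "inner (a *\<^sub>R u - b *\<^sub>R w) (a *\<^sub>R u - b *\<^sub>R w)
      = a * a * inner u u - 2 * a * b * inner u w + b * b * inner w w"
    by (simp add: inner_diff_left inner_diff_right inner_commute[of w u] algebra_simps)
  moreover have "inner (b *\<^sub>R u + a *\<^sub>R w) (b *\<^sub>R u + a *\<^sub>R w)
      = b * b * inner u u + 2 * a * b * inner u w + a * a * inner w w"
    by (simp add: inner_add_left inner_add_right inner_commute[of w u] algebra_simps)
  ultimately show ?thesis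
    unfolding power2_norm_eq_inner by (simp add: algebra_simps power2_eq_square)
qed

lemma complex_eigenvalue_cmod_le:
  fixes L :: "'a::euclidean_space \<Rightarrow> 'a"
  assumes bound: "\<And>x. norm (L x) \<le> K * norm x" and "complex_eigenvalue L \<mu>"
  shows "cmod \<mu> \<le> K"
proof -
  obtain u w where uw: "u \<noteq> 0 \<or> w \<noteq> 0" "L u = Re \<mu> *\<^sub>R u - Im \<mu> *\<^sub>R w"
    "L w = Im \<mu> *\<^sub>R u + Re \<mu> *\<^sub>R w"
    using assms(2) unfolding complex_eigenvalue_def by blast
  have "K \<ge> 0"
  proof (rule ccontr)
    assume "\<not> K \<ge> 0"
    then have "K * norm u < 0 \<or> K * norm w < 0" using uw(1) by (auto simp: mult_neg_pos)
    then show False using bound[of u] bound[of w] norm_ge_zero[of "L u"] norm_ge_zero[of "L w"]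
      by linarith
  qed
  define S where "S = (norm u)\<^sup>2 + (norm w)\<^sup>2"
  have "S > 0" using uw(1) by (auto simp: S_def add_pos_nonneg add_nonneg_pos)
  have "(cmod \<mu>)\<^sup>2 * S = (norm (L u))\<^sup>2 + (norm (L w))\<^sup>2"
    using norm_rotation_sum_squares[of "Re \<mu>" u "Im \<mu>" w] uw(2,3) by (simp add: S_def cmod_power2)
  also have "\<dots> \<le> (K * norm u)\<^sup>2 + (K * norm w)\<^sup>2"
    using bound[of u] bound[of w] by (intro add_mono power_mono) auto
  also have "\<dots> = K\<^sup>2 * S" by (simp add: S_def algebra_simps power_mult_distrib)
  finally have "(cmod \<mu>)\<^sup>2 \<le> K\<^sup>2" using \<open>S > 0\<close> by simp
  then show ?thesis using \<open>K \<ge> 0\<close> by (rule power2_le_imp_le)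
qed

text \<open>Rescaling L by a number c strictly between its spectral radius and 1 moves all complex
  eigenvalues into the open unit disc, where the powers are bounded.\<close>
lemma spectral_radius_lt_1_powers_decay:
  fixes L :: "'a::euclidean_space \<Rightarrow> 'a"
  assumes lin: "linear L" and "Defs.spectral_radius L < 1"
  obtains C c where "0 < c" "c < 1" "\<And>k x. norm ((L ^^ k) x) \<le> C * c ^ k * norm x"
proof -
  define \<rho> where "\<rho> = Defs.spectral_radius L"
  obtain K where K: "\<And>x. norm (L x) \<le> K * norm x"
    using lin linear_conv_bounded_linear bounded_linear.pos_bounded by (metis mult.commute)
  \<comment> \<open>spectral_radius is a Sup, so it bounds the eigenvalues only if they form a bounded set\<close>
  have "bdd_above (cmod ` {\<mu>. complex_eigenvalue L \<mu>})"
    using complex_eigenvalue_cmod_le[OF K] by (auto intro!: bdd_aboveI)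
  then have le_\<rho>: "cmod \<mu> \<le> \<rho>" if "complex_eigenvalue L \<mu>" for \<mu>
    unfolding \<rho>_def Defs.spectral_radius_def using that by (auto intro!: cSup_upper)
  define c where "c = (max \<rho> 0 + 1) / 2"
  have c: "0 < c" "c < 1" "\<rho> < c" using assms(2) by (auto simp: c_def \<rho>_def)
  define L' where "L' x = (1 / c) *\<^sub>R L x" for x
  have "linear L'" unfolding L'_def by (rule linear_compose_scale_right[OF lin])
  moreover have "cmod \<mu> < 1" if eigenvalue: "complex_eigenvalue L' \<mu>" for \<mu>
  proof -
    obtain u w where uw: "u \<noteq> 0 \<or> w \<noteq> 0" "L' u = Re \<mu> *\<^sub>R u - Im \<mu> *\<^sub>R w"
      "L' w = Im \<mu> *\<^sub>R u + Re \<mu> *\<^sub>R w"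
      using eigenvalue unfolding complex_eigenvalue_def by blast
    have "L u = c *\<^sub>R L' u" "L w = c *\<^sub>R L' w" using c by (auto simp: L'_def)
    then have "L u = Re (of_real c * \<mu>) *\<^sub>R u - Im (of_real c * \<mu>) *\<^sub>R w"
      "L w = Im (of_real c * \<mu>) *\<^sub>R u + Re (of_real c * \<mu>) *\<^sub>R w"
      using uw by (simp_all add: scaleR_diff_right scaleR_add_right)
    then have "complex_eigenvalue L (of_real c * \<mu>)"
      unfolding complex_eigenvalue_def using uw(1) by blast
    then have "c * cmod \<mu> \<le> \<rho>" using le_\<rho> c(1) by (metis norm_mult norm_of_real abs_of_pos)
    then have "c * cmod \<mu> < c * 1" using c by linarith
    then show ?thesis using c(1) by (simp add: mult_less_cancel_left_pos)
  qed
  ultimately obtain C where C: "\<And>k x. norm ((L' ^^ k) x) \<le> C * norm x"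
    using linear_powers_bounded by blast
  have L'_power: "(L' ^^ k) x = (1 / c) ^ k *\<^sub>R (L ^^ k) x" for k x
  proof (induction k arbitrary: x)
    case (Suc k)
    then show ?case
      using linear_scale[OF linear_funpow[OF lin, of k]]
      by (simp add: L'_def funpow_Suc_right del: funpow.simps)
  qed simp
  have "norm ((L ^^ k) x) \<le> C * c ^ k * norm x" for k x
  proof -
    have "norm ((L ^^ k) x) = c ^ k * norm ((L' ^^ k) x)"
      using c by (simp add: L'_power power_one_over)
    also have "\<dots> \<le> c ^ k * (C * norm x)" using C c by (intro mult_left_mono) auto
    finally show ?thesis by (simp add: algebra_simps)
  qed
  with c that show ?thesis by blast
qed

text \<open>The adapted norm is the finite sum of the weighted iterates norm (L^j v) / d^j, j < K:
  applying L shifts the sum by one index, and the new last term is dominated by the dropped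
  first term norm v once K is so large that C (c/d)^K \<le> 1.\<close>
lemma spectral_radius_lt_1_adapted_norm:
  fixes L :: "'a::euclidean_space \<Rightarrow> 'a"
  assumes lin: "linear L" and "Defs.spectral_radius L < 1"
  obtains N B d where "0 < d" "d < 1" "0 < B" "\<And>v. norm v \<le> N v" "\<And>v. N v \<le> B * norm v"
    "\<And>u v. N (u + v) \<le> N u + N v" "\<And>v. N (L v) \<le> d * N v"
proof -
  obtain C0 c where c: "0 < c" "c < 1" and C0: "\<And>k x. norm ((L ^^ k) x) \<le> C0 * c ^ k * norm x"
    using spectral_radius_lt_1_powers_decay[OF assms] by metis
  define C where "C = max C0 1"
  have C: "norm ((L ^^ k) x) \<le> C * c ^ k * norm x" for k x
  proof -
    have "C0 * c ^ k * norm x \<le> C * c ^ k * norm x"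
      unfolding C_def using c by (intro mult_right_mono) auto
    then show ?thesis using C0[of k x] by linarith
  qed
  define d where "d = (1 + c) / 2"
  have d: "0 < d" "d < 1" "c < d" using c by (auto simp: d_def)
  have "(\<lambda>k. C * (c / d) ^ k) \<longlonglongrightarrow> 0"
    using c d by (intro tendsto_mult_right_zero LIMSEQ_power_zero) auto
  then have "\<forall>\<^sub>F k in sequentially. C * (c / d) ^ k < 1 \<and> 1 \<le> k"
    by (intro eventually_conj order_tendstoD(2) eventually_ge_at_top) auto
  then obtain K where K: "C * (c / d) ^ K < 1" "1 \<le> K" by (auto simp: eventually_sequentially)
  define N where "N v = (\<Sum>j<K. norm ((L ^^ j) v) / d ^ j)" for v
  have lower: "norm v \<le> N v" for v
  proof -
    have "norm ((L ^^ 0) v) / d ^ 0 \<le> N v"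
      unfolding N_def using K(2) d by (intro member_le_sum) auto
    then show ?thesis by simp
  qed
  have upper: "N v \<le> (K * C) * norm v" for v
  proof -
    have "norm ((L ^^ j) v) / d ^ j \<le> C * norm v" for j
    proof -
      have "C * c ^ j * norm v \<le> C * d ^ j * norm v"
        using c d by (intro mult_right_mono mult_left_mono power_mono) (auto simp: C_def)
      then have "norm ((L ^^ j) v) / d ^ j \<le> (C * d ^ j * norm v) / d ^ j"
        using C[of j v] d by (intro divide_right_mono) auto
      also have "\<dots> = C * norm v" using d by simp
      finally show ?thesis .
    qed
    then have "N v \<le> (\<Sum>j<K. C * norm v)" unfolding N_def by (intro sum_mono)
    then show ?thesis by simp
  qed
  have triangle: "N (u + v) \<le> N u + N v" for u v
  proof -
    have "norm ((L ^^ j) (u + v)) / d ^ j \<le> (norm ((L ^^ j) u) + norm ((L ^^ j) v)) / d ^ j"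
      for j
      using d by (intro divide_right_mono)
        (simp_all add: linear_add[OF linear_funpow[OF lin]] norm_triangle_ineq)
    then have "norm ((L ^^ j) (u + v)) / d ^ j \<le> norm ((L ^^ j) u) / d ^ j + norm ((L ^^ j) v) / d ^ j"
      for j
      by (simp add: add_divide_distrib)
    then show ?thesis unfolding N_def sum.distrib[symmetric] by (intro sum_mono)
  qed
  have contraction: "N (L v) \<le> d * N v" for v
  proof -
    define a where "a j = norm ((L ^^ j) v) / d ^ j" for j
    have "N (L v) = (\<Sum>j<K. d * a (Suc j))"
      unfolding N_def a_def
    proof (intro sum.cong refl)
      fix j
      show "norm ((L ^^ j) (L v)) / d ^ j = d * (norm ((L ^^ Suc j) v) / d ^ Suc j)"
        using d by (simp add: funpow_swap1)
    qed
    also have "\<dots> = d * ((\<Sum>j<Suc K. a j) - a 0)"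
      by (subst sum.lessThan_Suc_shift) (simp add: sum_distrib_left)
    also have "(\<Sum>j<Suc K. a j) = N v + a K" by (simp add: N_def a_def)
    finally have "N (L v) = d * (N v + a K - a 0)" .
    moreover have "a K \<le> a 0"
    proof -
      have "a K \<le> C * c ^ K * norm v / d ^ K" unfolding a_def using C[of K v] d
        by (intro divide_right_mono) auto
      also have "\<dots> = (C * (c / d) ^ K) * norm v" by (simp add: power_divide)
      also have "\<dots> \<le> norm v" using K(1) c d by (intro mult_left_le_one_le) (auto simp: C_def)
      finally show ?thesis by (simp add: a_def)
    qed
    ultimately show ?thesis using d by (simp add: mult_left_mono)
  qed
  have "0 < K * C" using K(2) by (simp add: C_def)
  with d lower upper triangle contraction that show ?thesis by blast
qed

section \<open>Linearly stable fixed points under parameter perturbation\<close>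

lemma C1_mapE:
  fixes f :: "'a::euclidean_space \<times> 'b::euclidean_space \<Rightarrow> 'a"
  assumes "C1_map f"
  obtains f' where "\<And>z. (f has_derivative blinfun_apply (f' z)) (at z)" "continuous_on UNIV f'"
    "\<And>x l. Dx f x l = (\<lambda>v. blinfun_apply (f' (x, l)) (v, 0))"
proof -
  obtain f' where f': "\<And>z. (f has_derivative blinfun_apply (f' z)) (at z)" "continuous_on UNIV f'"
    using assms unfolding C1_map_def by blast
  moreover have "Dx f x l = (\<lambda>v. blinfun_apply (f' (x, l)) (v, 0))" for x l
    unfolding Dx_def using frechet_derivative_at[OF f'(1)[of "(x, l)"]] by simp
  ultimately show ?thesis using that by blast
qed

lemma C1_map_continuous:
  fixes f :: "'a::euclidean_space \<times> 'b::euclidean_space \<Rightarrow> 'a"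
  assumes "C1_map f"
  shows "continuous_on UNIV f"
proof -
  obtain f' where "\<And>z. (f has_derivative blinfun_apply (f' z)) (at z)"
    using assms unfolding C1_map_def by blast
  then show ?thesis by (meson has_derivative_continuous continuous_at_imp_continuous_on)
qed

lemma bounded_linear_Dx:
  fixes f :: "'a::euclidean_space \<times> 'b::euclidean_space \<Rightarrow> 'a"
  assumes "C1_map f"
  shows "bounded_linear (Dx f x l)"
proof -
  obtain f' where "\<And>z. (f has_derivative blinfun_apply (f' z)) (at z)" "continuous_on UNIV f'"
    and "\<And>x l. Dx f x l = (\<lambda>v. blinfun_apply (f' (x, l)) (v, 0))"
    using C1_mapE[OF assms] by blast
  moreover have "bounded_linear (\<lambda>v::'a. (v, 0::'b))"
    by (intro bounded_linear_Pair bounded_linear_ident bounded_linear_zero)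
  ultimately show ?thesis
    using bounded_linear_compose[OF blinfun.bounded_linear_right] by simp
qed

text \<open>Mean value inequality for the remainder z \<mapsto> f (z, l) - Dx f p l0 z, whose derivative is
  small near (p, l0) by continuity of the derivative.\<close>
lemma C1_map_partial_linearization:
  fixes f :: "'a::euclidean_space \<times> 'b::euclidean_space \<Rightarrow> 'a"
  assumes "C1_map f" "0 < \<epsilon>"
  obtains r where "0 < r"
    "\<And>x y l. norm (x - p) < r \<Longrightarrow> norm (y - p) < r \<Longrightarrow> norm (l - l0) < r \<Longrightarrow>
      norm (f (x, l) - f (y, l) - Dx f p l0 (x - y)) \<le> \<epsilon> * norm (x - y)"
proof -
  obtain f' where f': "\<And>z. (f has_derivative blinfun_apply (f' z)) (at z)" "continuous_on UNIV f'"
    "\<And>x l. Dx f x l = (\<lambda>v. blinfun_apply (f' (x, l)) (v, 0))"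
    using C1_mapE[OF assms(1)] by blast
  define L where "L = Dx f p l0"
  have L: "bounded_linear L" unfolding L_def by (rule bounded_linear_Dx[OF assms(1)])
  have "isCont f' (p, l0)" using f'(2) continuous_on_eq_continuous_at by blast
  then obtain r0 where r0: "0 < r0" "\<And>z. dist z (p, l0) < r0 \<Longrightarrow> dist (f' z) (f' (p, l0)) < \<epsilon>"
    using assms(2) unfolding continuous_at_eps_delta by blast
  have "norm (f (x, l) - f (y, l) - L (x - y)) \<le> \<epsilon> * norm (x - y)"
    if xyl: "norm (x - p) < r0 / 2" "norm (y - p) < r0 / 2" "norm (l - l0) < r0 / 2" for x y l
  proof -
    define h where "h z = f (z, l) - L z" for z
    have "(h has_derivative (\<lambda>v. blinfun_apply (f' (z, l)) (v, 0) - L v)) (at z within ball p (r0 / 2))"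
      for z
    proof -
      have "((\<lambda>z. (z, l)) has_derivative (\<lambda>v. (v, 0))) (at z within ball p (r0 / 2))"
        by (intro has_derivative_Pair has_derivative_ident has_derivative_const)
      from has_derivative_compose[OF this f'(1)]
        bounded_linear_imp_has_derivative[OF L]
      show ?thesis unfolding h_def by (intro has_derivative_diff) auto
    qed
    moreover have "onorm (\<lambda>v. blinfun_apply (f' (z, l)) (v, 0) - L v) \<le> \<epsilon>"
      if "z \<in> ball p (r0 / 2)" for z
    proof (rule onorm_le)
      fix v :: 'a
      have "dist (z, l) (p, l0) \<le> norm (z - p) + norm (l - l0)"
        using norm_Pair_le[of "z - p" "l - l0"] by (simp add: dist_norm)
      also have "\<dots> < r0" using that xyl(3) by (simp add: dist_norm norm_minus_commute)
      finally have "norm (f' (z, l) - f' (p, l0)) \<le> \<epsilon>" using r0(2) by (fastforce simp: dist_norm)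
      have "norm (blinfun_apply (f' (z, l)) (v, 0) - L v)
          = norm (blinfun_apply (f' (z, l) - f' (p, l0)) (v, 0))"
        by (simp add: L_def f'(3) minus_blinfun.rep_eq)
      also have "\<dots> \<le> norm (f' (z, l) - f' (p, l0)) * norm (v, 0::'b)" by (rule norm_blinfun)
      also have "\<dots> \<le> \<epsilon> * norm v"
        using \<open>norm (f' (z, l) - f' (p, l0)) \<le> \<epsilon>\<close> by (simp add: norm_Pair mult_right_mono)
      finally show "norm (blinfun_apply (f' (z, l)) (v, 0) - L v) \<le> \<epsilon> * norm v" .
    qed
    moreover have "x \<in> ball p (r0 / 2)" "y \<in> ball p (r0 / 2)"
      using xyl by (auto simp: dist_norm norm_minus_commute)
    ultimately have "norm (h x - h y) \<le> \<epsilon> * norm (x - y)"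
      by (intro differentiable_bound[where S = "ball p (r0 / 2)"]) auto
    moreover have "h x - h y = f (x, l) - f (y, l) - L (x - y)"
      using linear_diff[OF bounded_linear.linear[OF L], of x y] by (simp add: h_def)
    ultimately show ?thesis by simp
  qed
  then show ?thesis using that[of "r0 / 2"] r0(1) by (simp add: L_def)
qed

locale local_contraction =
  fixes f :: "'a::euclidean_space \<times> 'b::euclidean_space \<Rightarrow> 'a"
    and p :: 'a and l0 :: 'b and N :: "'a \<Rightarrow> real" and B d r :: real
  assumes f_continuous: "continuous_on UNIV f"
    and fixed_point: "f (p, l0) = p"
    and rate: "0 \<le> d" "d < 1"
    and B_pos: "0 < B"
    and radius: "0 < r"
    and norm_le_N: "\<And>v. norm v \<le> N v"
    and N_le: "\<And>v. N v \<le> B * norm v"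
    and N_triangle: "\<And>u v. N (u + v) \<le> N u + N v"
    and contraction: "\<And>x y l. norm (x - p) < r \<Longrightarrow> norm (y - p) < r \<Longrightarrow> norm (l - l0) < r \<Longrightarrow>
      N (f (x, l) - f (y, l)) \<le> d * N (x - y)"

lemma attracting_fixed_point_local_contraction:
  fixes f :: "'a::euclidean_space \<times> 'b::euclidean_space \<Rightarrow> 'a"
  assumes C1: "C1_map f" and "attracting_fixed_point f p l0"
  obtains N B d r where "local_contraction f p l0 N B d r"
proof -
  define L where "L = Dx f p l0"
  have "linear L" unfolding L_def using bounded_linear_Dx[OF C1] bounded_linear.linear by blast
  moreover have "Defs.spectral_radius L < 1"
    using assms(2) by (simp add: L_def attracting_fixed_point_def)
  ultimately obtain N B d0 where N: "0 < d0" "d0 < 1" "0 < B" "\<And>v. norm v \<le> N v"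
    "\<And>v. N v \<le> B * norm v" "\<And>u v. N (u + v) \<le> N u + N v" "\<And>v. N (L v) \<le> d0 * N v"
    using spectral_radius_lt_1_adapted_norm by metis
  define \<epsilon> where "\<epsilon> = (1 - d0) / (2 * B)"
  have "0 < \<epsilon>" using N by (simp add: \<epsilon>_def)
  then obtain r where r: "0 < r"
    "\<And>x y l. norm (x - p) < r \<Longrightarrow> norm (y - p) < r \<Longrightarrow> norm (l - l0) < r \<Longrightarrow>
      norm (f (x, l) - f (y, l) - L (x - y)) \<le> \<epsilon> * norm (x - y)"
    using C1_map_partial_linearization[OF C1] unfolding L_def by metis
  have "N (f (x, l) - f (y, l)) \<le> ((1 + d0) / 2) * N (x - y)"
    if "norm (x - p) < r" "norm (y - p) < r" "norm (l - l0) < r" for x y l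
  proof -
    have "N (f (x, l) - f (y, l)) \<le> N (L (x - y)) + N (f (x, l) - f (y, l) - L (x - y))"
      using N(6)[of "L (x - y)" "f (x, l) - f (y, l) - L (x - y)"] by simp
    also have "\<dots> \<le> d0 * N (x - y) + B * (\<epsilon> * norm (x - y))"
      using N(5)[of "f (x, l) - f (y, l) - L (x - y)"] N(3,7) r(2)[OF that]
      by (smt (verit) mult_left_mono)
    also have "B * (\<epsilon> * norm (x - y)) = ((1 - d0) / 2) * norm (x - y)"
      using N(3) by (simp add: \<epsilon>_def field_simps)
    also have "\<dots> \<le> ((1 - d0) / 2) * N (x - y)" using N(2,4) by (intro mult_left_mono) auto
    finally show ?thesis by (simp add: field_simps)
  qed
  moreover have "continuous_on UNIV f" by (rule C1_map_continuous[OF C1])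
  ultimately have "local_contraction f p l0 N B ((1 + d0) / 2) r"
    using assms(2) N r(1) by unfold_locales (auto simp: attracting_fixed_point_def)
  with that show ?thesis by blast
qed

lemma contracting_recurrence_LIMSEQ_zero:
  fixes e a :: "nat \<Rightarrow> real"
  assumes d: "0 \<le> d" "d < 1" and e: "\<And>n. 0 \<le> e n" "\<And>n. e n \<le> E"
    and recurrence: "\<And>n. e (Suc n) \<le> d * e n + a n" and "a \<longlonglongrightarrow> 0"
  shows "e \<longlonglongrightarrow> 0"
proof (rule LIMSEQ_I)
  fix \<eta> :: real
  assume "\<eta> > 0"
  then have "(1 - d) * \<eta> / 2 > 0" using d by simp
  from LIMSEQ_D[OF \<open>a \<longlonglongrightarrow> 0\<close> this] obtain m where m: "\<And>n. n \<ge> m \<Longrightarrow> norm (a n) < (1 - d) * \<eta> / 2"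
    by auto
  have "E \<ge> 0" using e(1)[of 0] e(2)[of 0] by linarith
  have tail: "e (m + k) \<le> d ^ k * E + \<eta> / 2" for k
  proof (induction k)
    case 0
    then show ?case using e(2)[of m] \<open>\<eta> > 0\<close> by simp
  next
    case (Suc k)
    have "e (m + Suc k) \<le> d * e (m + k) + a (m + k)" using recurrence[of "m + k"] by simp
    also have "\<dots> \<le> d * (d ^ k * E + \<eta> / 2) + (1 - d) * \<eta> / 2"
      using Suc m[of "m + k"] d by (intro add_mono mult_left_mono) auto
    also have "\<dots> = d ^ Suc k * E + \<eta> / 2" by (simp add: field_simps)
    finally show ?case .
  qed
  have "(\<lambda>k. d ^ k * E) \<longlonglongrightarrow> 0" using d by (intro tendsto_mult_left_zero LIMSEQ_power_zero) auto
  from LIMSEQ_D[OF this, of "\<eta> / 2"] \<open>\<eta> > 0\<close>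
  obtain k0 where k0: "\<And>k. k \<ge> k0 \<Longrightarrow> norm (d ^ k * E) < \<eta> / 2"
    by auto
  have "norm (e n) < \<eta>" if "n \<ge> m + k0" for n
  proof -
    have "k0 \<le> n - m" "e n \<le> d ^ (n - m) * E + \<eta> / 2" using that tail[of "n - m"] by auto
    then show ?thesis using k0[of "n - m"] e(1)[of n] d \<open>E \<ge> 0\<close> by simp
  qed
  then show "\<exists>n0. \<forall>n\<ge>n0. norm (e n - 0) < \<eta>" by auto
qed

context local_contraction
begin

lemma sublevel_invariant:
  assumes "0 < \<epsilon>" "\<epsilon> < r"
  obtains \<delta> where "0 < \<delta>" "\<delta> \<le> r"
    "\<And>x l. N (x - p) \<le> \<epsilon> \<Longrightarrow> norm (l - l0) < \<delta> \<Longrightarrow> N (f (x, l) - p) \<le> \<epsilon>"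
proof -
  have "isCont f (p, l0)" using f_continuous continuous_on_eq_continuous_at by blast
  moreover have "(1 - d) * \<epsilon> / B > 0" using rate assms B_pos by simp
  ultimately obtain \<delta>1 where \<delta>1: "\<delta>1 > 0"
    "\<And>z. dist z (p, l0) < \<delta>1 \<Longrightarrow> dist (f z) (f (p, l0)) < (1 - d) * \<epsilon> / B"
    unfolding continuous_at_eps_delta by blast
  have "N (f (x, l) - p) \<le> \<epsilon>" if x: "N (x - p) \<le> \<epsilon>" and l: "norm (l - l0) < min \<delta>1 r" for x l
  proof -
    have "norm (f (p, l) - p) < (1 - d) * \<epsilon> / B"
      using l \<delta>1(2)[of "(p, l)"] fixed_point by (simp add: dist_Pair_Pair dist_norm)
    then have "N (f (p, l) - p) \<le> (1 - d) * \<epsilon>"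
      using N_le[of "f (p, l) - p"] B_pos by (simp add: field_simps)
    moreover have "N (f (x, l) - f (p, l)) \<le> d * N (x - p)"
      using contraction[of x p l] norm_le_N[of "x - p"] x l assms by simp
    moreover have "d * N (x - p) \<le> d * \<epsilon>" using x rate by (intro mult_left_mono) auto
    moreover have "N (f (x, l) - p) \<le> N (f (x, l) - f (p, l)) + N (f (p, l) - p)"
      using N_triangle[of "f (x, l) - f (p, l)" "f (p, l) - p"] by simp
    ultimately show ?thesis by (simp add: algebra_simps)
  qed
  then show ?thesis using that[of "min \<delta>1 r"] \<delta>1(1) assms by simp
qed

text \<open>Along an orbit confined to the contraction region, the distance e n = N (y n - p)
  satisfies e (n + 1) \<le> d e n + B norm (f (p, \<mu> n) - p), and the forcing term vanishes.\<close>
lemma tendsto_fixed_point: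
  assumes "\<epsilon> < r" "\<And>n. N (y n - p) \<le> \<epsilon>" "\<And>n. norm (\<mu> n - l0) < r"
    and orbit: "\<And>n. y (Suc n) = f (y n, \<mu> n)" and "\<mu> \<longlonglongrightarrow> l0"
  shows "y \<longlonglongrightarrow> p"
proof -
  define e where "e n = N (y n - p)" for n
  define a where "a n = B * norm (f (p, \<mu> n) - p)" for n
  have recurrence: "e (Suc n) \<le> d * e n + a n" for n
  proof -
    have "norm (y n - p) < r" using norm_le_N[of "y n - p"] assms(1) assms(2)[of n] by linarith
    then have "N (f (y n, \<mu> n) - f (p, \<mu> n)) \<le> d * e n"
      using contraction[of "y n" p "\<mu> n"] assms(3)[of n] radius by (simp add: e_def)
    moreover have "N (f (p, \<mu> n) - p) \<le> a n" by (simp add: a_def N_le)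
    moreover have "e (Suc n) \<le> N (f (y n, \<mu> n) - f (p, \<mu> n)) + N (f (p, \<mu> n) - p)"
      using N_triangle[of "f (y n, \<mu> n) - f (p, \<mu> n)" "f (p, \<mu> n) - p"] orbit[of n]
      by (simp add: e_def)
    ultimately show ?thesis by linarith
  qed
  have a_lim: "a \<longlonglongrightarrow> 0"
  proof -
    have "isCont f (p, l0)" using f_continuous continuous_on_eq_continuous_at by blast
    moreover have "(\<lambda>n. (p, \<mu> n)) \<longlonglongrightarrow> (p, l0)" using \<open>\<mu> \<longlonglongrightarrow> l0\<close> by (intro tendsto_intros)
    ultimately have "(\<lambda>n. f (p, \<mu> n)) \<longlonglongrightarrow> f (p, l0)" by (rule isCont_tendsto_compose)
    then have "(\<lambda>n. f (p, \<mu> n) - p) \<longlonglongrightarrow> 0" using fixed_point by (simp add: LIM_zero)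
    then show ?thesis unfolding a_def by (intro tendsto_mult_right_zero tendsto_norm_zero)
  qed
  have nonneg: "0 \<le> e n" for n
    unfolding e_def using norm_le_N[of "y n - p"] norm_ge_zero[of "y n - p"] by linarith
  have bounded: "e n \<le> \<epsilon>" for n by (simp add: e_def assms(2))
  have "e \<longlonglongrightarrow> 0"
    by (rule contracting_recurrence_LIMSEQ_zero[OF rate nonneg bounded recurrence a_lim])
  then have "(\<lambda>n. y n - p) \<longlonglongrightarrow> 0"
    by (rule Lim_null_comparison[rotated]) (simp add: e_def norm_le_N)
  then show ?thesis by (rule LIM_zero_cancel)
qed

end

lemma attracting_fixed_point_nbhd:
  fixes f :: "'a::euclidean_space \<times> 'b::euclidean_space \<Rightarrow> 'a"
  assumes "C1_map f" "attracting_fixed_point f p l0" "0 < \<epsilon>"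
  shows "\<exists>U \<rho> \<delta>. 0 < \<rho> \<and> 0 < \<delta> \<and>
    (\<forall>x. norm (x - p) < \<rho> \<longrightarrow> x \<in> U) \<and> (\<forall>x\<in>U. norm (x - p) < \<epsilon>) \<and>
    (\<forall>x\<in>U. \<forall>l. norm (l - l0) < \<delta> \<longrightarrow> f (x, l) \<in> U) \<and>
    (\<forall>y \<mu>. (\<forall>n. y (Suc n) = f (y n, \<mu> n)) \<and> y 0 \<in> U \<and> (\<forall>n. norm (\<mu> n - l0) < \<delta>) \<and>
      \<mu> \<longlonglongrightarrow> l0 \<longrightarrow> y \<longlonglongrightarrow> p)"
proof -
  obtain N B d r where "local_contraction f p l0 N B d r"
    using attracting_fixed_point_local_contraction[OF assms(1,2)] by blast
  then interpret local_contraction f p l0 N B d r .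
  define \<epsilon>' where "\<epsilon>' = min (\<epsilon> / 2) (r / 2)"
  have \<epsilon>': "0 < \<epsilon>'" "\<epsilon>' < \<epsilon>" "\<epsilon>' < r" using assms(3) radius by (auto simp: \<epsilon>'_def)
  then obtain \<delta> where \<delta>: "0 < \<delta>" "\<delta> \<le> r"
    and invariant: "\<And>x l. N (x - p) \<le> \<epsilon>' \<Longrightarrow> norm (l - l0) < \<delta> \<Longrightarrow> N (f (x, l) - p) \<le> \<epsilon>'"
    using sublevel_invariant by metis
  define U where "U = {x. N (x - p) \<le> \<epsilon>'}"
  have "x \<in> U" if "norm (x - p) < \<epsilon>' / B" for x
    using that N_le[of "x - p"] B_pos by (simp add: U_def field_simps)
  moreover have "norm (x - p) < \<epsilon>" if "x \<in> U" for x
    using that norm_le_N[of "x - p"] \<epsilon>' by (simp add: U_def)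
  moreover have "y \<longlonglongrightarrow> p" if orbit: "\<And>n. y (Suc n) = f (y n, \<mu> n)" and "y 0 \<in> U"
    and \<mu>: "\<And>n. norm (\<mu> n - l0) < \<delta>" "\<mu> \<longlonglongrightarrow> l0" for y \<mu>
  proof (rule tendsto_fixed_point[OF \<epsilon>'(3) _ _ orbit \<mu>(2)])
    show "N (y n - p) \<le> \<epsilon>'" for n
      using \<open>y 0 \<in> U\<close> by (induction n) (auto simp: U_def orbit invariant \<mu>(1))
    show "norm (\<mu> n - l0) < r" for n using \<mu>(1)[of n] \<delta>(2) by simp
  qed
  moreover have "f (x, l) \<in> U" if "x \<in> U" "norm (l - l0) < \<delta>" for x l
    using that invariant by (simp add: U_def)
  moreover have "0 < \<epsilon>' / B" using \<epsilon>' B_pos by simp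
  ultimately show ?thesis using \<delta>(1) by (intro exI[of _ U] exI[of _ "\<epsilon>' / B"] exI[of _ \<delta>]) blast
qed

section \<open>Orbits of the rate-dependent system\<close>

lemma isCont_Pair_eps_delta:
  fixes F :: "'a::real_normed_vector \<times> 'b::real_normed_vector \<Rightarrow> 'c::real_normed_vector"
  assumes "isCont F (a, b)" "0 < \<epsilon>"
  obtains \<theta> where "0 < \<theta>"
    "\<And>x l. norm (x - a) < \<theta> \<Longrightarrow> norm (l - b) < \<theta> \<Longrightarrow> norm (F (x, l) - F (a, b)) < \<epsilon>"
proof -
  obtain \<delta> where \<delta>: "0 < \<delta>" "\<And>z. dist z (a, b) < \<delta> \<Longrightarrow> dist (F z) (F (a, b)) < \<epsilon>"
    using assms unfolding continuous_at_eps_delta by blast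
  have "norm (F (x, l) - F (a, b)) < \<epsilon>" if "norm (x - a) < \<delta> / 2" "norm (l - b) < \<delta> / 2" for x l
  proof -
    have "dist (x, l) (a, b) \<le> norm (x - a) + norm (l - b)"
      using norm_Pair_le[of "x - a" "l - b"] by (simp add: dist_norm)
    also have "\<dots> < \<delta>" using that by simp
    finally show ?thesis using \<delta>(2) by (simp add: dist_norm)
  qed
  with \<delta>(1) that[of "\<delta> / 2"] show ?thesis by simp
qed

lemma orbit_continuous_dependence:
  fixes f :: "'a::real_normed_vector \<times> 'b::real_normed_vector \<Rightarrow> 'a"
  assumes "continuous_on UNIV f"
  shows "0 < \<epsilon> \<Longrightarrow> \<exists>\<eta>>0. \<forall>y \<mu>. (\<forall>i<K. y (Suc i) = f (y i, \<mu> i)) \<and> norm (y 0 - z) < \<eta> \<and>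
      (\<forall>i<K. norm (\<mu> i - l) < \<eta>) \<longrightarrow> norm (y K - ((\<lambda>x. f (x, l)) ^^ K) z) < \<epsilon>"
proof (induction K arbitrary: \<epsilon>)
  case 0
  then show ?case by auto
next
  case (Suc K)
  define w where "w = ((\<lambda>x. f (x, l)) ^^ K) z"
  have "isCont f (w, l)" using assms continuous_on_eq_continuous_at by blast
  from isCont_Pair_eps_delta[OF this Suc.prems]
  obtain \<theta> where \<theta>: "0 < \<theta>"
    "\<And>x l'. norm (x - w) < \<theta> \<Longrightarrow> norm (l' - l) < \<theta> \<Longrightarrow> norm (f (x, l') - f (w, l)) < \<epsilon>"
    by blast
  obtain \<eta> where \<eta>: "0 < \<eta>" "\<And>y \<mu>. (\<forall>i<K. y (Suc i) = f (y i, \<mu> i)) \<Longrightarrow> norm (y 0 - z) < \<eta> \<Longrightarrow>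
      (\<forall>i<K. norm (\<mu> i - l) < \<eta>) \<Longrightarrow> norm (y K - w) < \<theta>"
    using Suc.IH[OF \<theta>(1)] unfolding w_def by blast
  have "norm (y (Suc K) - ((\<lambda>x. f (x, l)) ^^ Suc K) z) < \<epsilon>"
    if "\<forall>i<Suc K. y (Suc i) = f (y i, \<mu> i)" "norm (y 0 - z) < min \<eta> \<theta>"
      "\<forall>i<Suc K. norm (\<mu> i - l) < min \<eta> \<theta>" for y \<mu>
    using \<theta>(2)[OF \<eta>(2)[of y \<mu>]] that by (simp add: w_def)
  with \<eta>(1) \<theta>(1) show ?case by (intro exI[of _ "min \<eta> \<theta>"]) auto
qed

lemma basin_preimage:
  assumes "f (z, l) \<in> basin f p l"
  shows "z \<in> basin f p l"
proof -
  have "(\<lambda>n. ((\<lambda>x. f (x, l)) ^^ Suc n) z) \<longlonglongrightarrow> p"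
    using assms by (simp add: basin_def funpow_Suc_right del: funpow.simps)
  then show ?thesis unfolding basin_def mem_Collect_eq by (rule LIMSEQ_imp_Suc)
qed

text \<open>The unperturbed orbit of z enters the attracting neighbourhood of p after K steps; by
  continuous dependence on finitely many steps, so does every orbit starting near z whose
  parameters stay near l0, and from then on the local attraction takes over.\<close>
lemma basin_perturbed_orbit_tendsto:
  fixes f :: "'a::euclidean_space \<times> 'b::euclidean_space \<Rightarrow> 'a"
  assumes C1: "C1_map f" and "attracting_fixed_point f p l0" "z \<in> basin f p l0"
  shows "\<exists>\<eta> \<delta>. 0 < \<eta> \<and> 0 < \<delta> \<and>
    (\<forall>y \<mu> m. (\<forall>n\<ge>m. y (Suc n) = f (y n, \<mu> n)) \<and> norm (y m - z) < \<eta> \<and>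
      (\<forall>n\<ge>m. norm (\<mu> n - l0) < \<delta>) \<and> \<mu> \<longlonglongrightarrow> l0 \<longrightarrow> y \<longlonglongrightarrow> p)"
proof -
  have one: "(0::real) < 1" by simp
  obtain U \<rho> \<delta> where \<rho>: "0 < \<rho>" "0 < \<delta>" and U: "\<And>x. norm (x - p) < \<rho> \<Longrightarrow> x \<in> U"
    and attract: "\<And>y \<mu>. (\<forall>n. y (Suc n) = f (y n, \<mu> n)) \<Longrightarrow> y 0 \<in> U \<Longrightarrow>
      (\<forall>n. norm (\<mu> n - l0) < \<delta>) \<Longrightarrow> \<mu> \<longlonglongrightarrow> l0 \<Longrightarrow> y \<longlonglongrightarrow> p"
    using attracting_fixed_point_nbhd[OF C1 assms(2) one] by metis
  have "(\<lambda>n. ((\<lambda>x. f (x, l0)) ^^ n) z) \<longlonglongrightarrow> p" using assms(3) by (simp add: basin_def)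
  from LIMSEQ_D[OF this, of "\<rho> / 2"] \<rho>(1)
  obtain K where K: "norm (((\<lambda>x. f (x, l0)) ^^ K) z - p) < \<rho> / 2" by auto
  have "0 < \<rho> / 2" using \<rho>(1) by simp
  from orbit_continuous_dependence[OF C1_map_continuous[OF C1] this]
  obtain \<eta> where "0 < \<eta>" and tracking: "\<forall>y \<mu>. (\<forall>i<K. y (Suc i) = f (y i, \<mu> i)) \<and>
      norm (y 0 - z) < \<eta> \<and> (\<forall>i<K. norm (\<mu> i - l0) < \<eta>) \<longrightarrow>
      norm (y K - ((\<lambda>x. f (x, l0)) ^^ K) z) < \<rho> / 2"
    by blast
  have "y \<longlonglongrightarrow> p"
    if orbit: "\<forall>n\<ge>m. y (Suc n) = f (y n, \<mu> n)" and "norm (y m - z) < \<eta>"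
      and \<mu>: "\<forall>n\<ge>m. norm (\<mu> n - l0) < min \<delta> \<eta>" "\<mu> \<longlonglongrightarrow> l0" for y \<mu> m
  proof -
    have "norm (y (K + m) - ((\<lambda>x. f (x, l0)) ^^ K) z) < \<rho> / 2"
      using tracking[rule_format, of "\<lambda>k. y (k + m)" "\<lambda>k. \<mu> (k + m)"] that by auto
    from norm_diff_triangle_less[OF this K] have "y (0 + (K + m)) \<in> U" by (simp add: U)
    then have "(\<lambda>n. y (n + (K + m))) \<longlonglongrightarrow> p"
      using orbit \<mu> by (intro attract[of _ "\<lambda>n. \<mu> (n + (K + m))"])
        (auto simp: LIMSEQ_ignore_initial_segment)
    then show "y \<longlonglongrightarrow> p" by (rule LIMSEQ_offset)
  qed
  with \<open>0 < \<eta>\<close> \<rho>(2) show ?thesis by (intro exI[of _ \<eta>] exI[of _ "min \<delta> \<eta>"]) auto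
qed

lemma tendsto_at_bot_at_top_rescaled:
  fixes \<Lambda> :: "real \<Rightarrow> 'b::real_normed_vector"
  assumes "(\<Lambda> \<longlongrightarrow> lm) at_bot" "(\<Lambda> \<longlongrightarrow> lp) at_top" "0 < \<delta>"
  obtains r1 where "0 < r1"
    "\<And>r s. r1 < r \<Longrightarrow> s \<le> -1 \<Longrightarrow> norm (\<Lambda> (r * s) - lm) < \<delta>"
    "\<And>r s. r1 < r \<Longrightarrow> 1 \<le> s \<Longrightarrow> norm (\<Lambda> (r * s) - lp) < \<delta>"
    "\<And>r. r1 < r \<Longrightarrow> (\<lambda>k. \<Lambda> (r * real k)) \<longlonglongrightarrow> lp"
proof -
  obtain S1 where S1: "\<And>s. s \<le> S1 \<Longrightarrow> norm (\<Lambda> s - lm) < \<delta>"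
    using assms(1,3) unfolding tendsto_iff eventually_at_bot_linorder dist_norm by blast
  obtain S2 where S2: "\<And>s. S2 \<le> s \<Longrightarrow> norm (\<Lambda> s - lp) < \<delta>"
    using assms(2,3) unfolding tendsto_iff eventually_at_top_linorder dist_norm by blast
  define r1 where "r1 = max 1 (max (- S1) S2)"
  show ?thesis
  proof (rule that)
    show "0 < r1" by (simp add: r1_def)
    show "norm (\<Lambda> (r * s) - lm) < \<delta>" if "r1 < r" "s \<le> -1" for r s
    proof (rule S1)
      have "r * s \<le> r * (-1)" by (rule mult_left_mono) (use that in \<open>auto simp: r1_def\<close>)
      moreover have "- S1 < r" using that by (simp add: r1_def)
      ultimately show "r * s \<le> S1" by linarith
    qed
    show "norm (\<Lambda> (r * s) - lp) < \<delta>" if "r1 < r" "1 \<le> s" for r s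
    proof (rule S2)
      have "r * 1 \<le> r * s" by (rule mult_left_mono) (use that in \<open>auto simp: r1_def\<close>)
      moreover have "S2 < r" using that by (simp add: r1_def)
      ultimately show "S2 \<le> r * s" by linarith
    qed
    show "(\<lambda>k. \<Lambda> (r * real k)) \<longlonglongrightarrow> lp" if "r1 < r" for r
    proof -
      have "filterlim (\<lambda>k. r * real k) at_top sequentially"
        using that by (intro filterlim_tendsto_pos_mult_at_top[OF tendsto_const]
          filterlim_real_sequentially) (auto simp: r1_def)
      then show ?thesis by (rule filterlim_compose[OF assms(2)])
    qed
  qed
qed

lemma eventually_at_bot_int_induct:
  fixes P :: "int \<Rightarrow> bool"
  assumes "eventually P at_bot" and step: "\<And>n. n < 0 \<Longrightarrow> P n \<Longrightarrow> P (n + 1)"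
  shows "P 0"
proof -
  obtain m where "\<And>n. n \<le> m \<Longrightarrow> P n" using assms(1) by (auto simp: eventually_at_bot_linorder)
  then have "P (min m 0)" by simp
  have "i \<le> 0 \<longrightarrow> P i" if "min m 0 \<le> i" for i
    using that
  proof (induction i rule: int_ge_induct)
    case base
    show ?case using \<open>P (min m 0)\<close> by simp
  next
    case (step i)
    then show ?case using assms(2)[of i] by simp
  qed
  then show ?thesis by simp
qed

lemma attracting_fixed_point_backward_orbit:
  fixes f :: "'a::euclidean_space \<times> 'b::euclidean_space \<Rightarrow> 'a"
  assumes "C1_map f" "attracting_fixed_point f p l0" "0 < \<epsilon>"
  shows "\<exists>\<delta>>0. \<forall>x :: int \<Rightarrow> 'a. \<forall>\<mu>. (\<forall>n. x (n + 1) = f (x n, \<mu> n)) \<and> (x \<longlongrightarrow> p) at_bot \<and>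
    (\<forall>n<0. norm (\<mu> n - l0) < \<delta>) \<longrightarrow> norm (x 0 - p) < \<epsilon>"
proof -
  obtain U \<rho> \<delta> where "0 < \<rho>" "0 < \<delta>" and U: "\<And>x. norm (x - p) < \<rho> \<Longrightarrow> x \<in> U"
    "\<And>x. x \<in> U \<Longrightarrow> norm (x - p) < \<epsilon>" "\<And>x l. x \<in> U \<Longrightarrow> norm (l - l0) < \<delta> \<Longrightarrow> f (x, l) \<in> U"
    using attracting_fixed_point_nbhd[OF assms] by metis
  have "x 0 \<in> U" if orbit: "\<forall>n. x (n + 1) = f (x n, \<mu> n)" and "(x \<longlongrightarrow> p) at_bot"
    and \<mu>: "\<forall>n<0. norm (\<mu> n - l0) < \<delta>" for x :: "int \<Rightarrow> 'a" and \<mu>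
  proof (rule eventually_at_bot_int_induct)
    have "\<forall>\<^sub>F n in at_bot. norm (x n - p) < \<rho>"
      using \<open>(x \<longlongrightarrow> p) at_bot\<close> \<open>0 < \<rho>\<close> unfolding tendsto_iff dist_norm by blast
    then show "\<forall>\<^sub>F n in at_bot. x n \<in> U" by (rule eventually_mono) (rule U(1))
    show "x (n + 1) \<in> U" if "n < 0" "x n \<in> U" for n
      using U(3)[OF that(2)] \<mu> that(1) orbit by simp
  qed
  with \<open>0 < \<delta>\<close> U(2) show ?thesis by blast
qed

theorem mainTheorem5:
  fixes f :: "'a::euclidean_space \<times> 'b::euclidean_space \<Rightarrow> 'a"
    and \<Lambda> :: "real \<Rightarrow> 'b" and X :: "real \<Rightarrow> 'a"
  assumes "C1_map f"
    and "parameter_shift \<Lambda> lm lp"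
    and "stable_path f \<Lambda> lm lp X Xm Xp"
    and "attracting_fixed_point f Yp lp"
    and "f (f (Xm, \<Lambda> 0), lp) \<in> basin f Yp lp"
  shows "\<exists>r1>0. \<forall>r>r1. \<forall>x :: int \<Rightarrow> 'a.
           (\<forall>n. x (n + 1) = f (x n, \<Lambda> (r * of_int n))) \<and> (x \<longlongrightarrow> Xm) at_bot
           \<longrightarrow> (x \<longlongrightarrow> Yp) at_top"
proof -
  have \<Lambda>: "(\<Lambda> \<longlongrightarrow> lm) at_bot" "(\<Lambda> \<longlongrightarrow> lp) at_top"
    using assms(2) by (auto simp: parameter_shift_def)
  have Xm: "attracting_fixed_point f Xm lm"
    using assms(3) by (simp add: stable_path_def attracting_fixed_point_def)
  from basin_perturbed_orbit_tendsto[OF assms(1,4) basin_preimage[OF assms(5)]]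
  obtain \<eta> \<delta>p where "0 < \<eta>" "0 < \<delta>p" and forward: "\<forall>y \<mu> m.
      (\<forall>n\<ge>m. y (Suc n) = f (y n, \<mu> n)) \<and> norm (y m - f (Xm, \<Lambda> 0)) < \<eta> \<and>
      (\<forall>n\<ge>m. norm (\<mu> n - lp) < \<delta>p) \<and> \<mu> \<longlonglongrightarrow> lp \<longrightarrow> y \<longlonglongrightarrow> Yp"
    by blast
  have "isCont f (Xm, \<Lambda> 0)"
    using C1_map_continuous[OF assms(1)] continuous_on_eq_continuous_at by blast
  from isCont_Pair_eps_delta[OF this \<open>0 < \<eta>\<close>]
  obtain \<theta> where "0 < \<theta>"
    and first_step: "\<And>x. norm (x - Xm) < \<theta> \<Longrightarrow> norm (f (x, \<Lambda> 0) - f (Xm, \<Lambda> 0)) < \<eta>"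
    by (metis diff_self norm_zero)
  from attracting_fixed_point_backward_orbit[OF assms(1) Xm \<open>0 < \<theta>\<close>]
  obtain \<delta>m where "0 < \<delta>m" and backward: "\<forall>x :: int \<Rightarrow> 'a. \<forall>\<mu>. (\<forall>n. x (n + 1) = f (x n, \<mu> n)) \<and>
      (x \<longlongrightarrow> Xm) at_bot \<and> (\<forall>n<0. norm (\<mu> n - lm) < \<delta>m) \<longrightarrow> norm (x 0 - Xm) < \<theta>"
    by blast
  obtain r1 where "0 < r1"
    and near: "\<And>r s. r1 < r \<Longrightarrow> s \<le> -1 \<Longrightarrow> norm (\<Lambda> (r * s) - lm) < \<delta>m"
      "\<And>r s. r1 < r \<Longrightarrow> 1 \<le> s \<Longrightarrow> norm (\<Lambda> (r * s) - lp) < \<delta>p"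
      "\<And>r. r1 < r \<Longrightarrow> (\<lambda>k. \<Lambda> (r * real k)) \<longlonglongrightarrow> lp"
    using tendsto_at_bot_at_top_rescaled[OF \<Lambda>, of "min \<delta>m \<delta>p"] \<open>0 < \<delta>m\<close> \<open>0 < \<delta>p\<close>
    by (metis min_less_iff_conj)
  show ?thesis
  proof (intro exI[of _ r1] conjI allI impI)
    show "0 < r1" by fact
    fix r :: real and x :: "int \<Rightarrow> 'a"
    assume "r1 < r" and x: "(\<forall>n. x (n + 1) = f (x n, \<Lambda> (r * of_int n))) \<and> (x \<longlongrightarrow> Xm) at_bot"
    moreover have "\<forall>n<0. norm (\<Lambda> (r * of_int n) - lm) < \<delta>m"
      using near(1)[OF \<open>r1 < r\<close>] by simp
    ultimately have "norm (x 0 - Xm) < \<theta>"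
      using backward[rule_format, of x "\<lambda>n. \<Lambda> (r * of_int n)"] by blast
    then have "norm (x (int 1) - f (Xm, \<Lambda> 0)) < \<eta>"
      using first_step x by (metis add_0 of_int_0 mult_zero_right of_nat_1)
    moreover have "x (int (Suc n)) = f (x (int n), \<Lambda> (r * real n))" for n
    proof -
      have "x (int n + 1) = f (x (int n), \<Lambda> (r * of_int (int n)))" using x by blast
      then show ?thesis by (simp add: add.commute)
    qed
    moreover have "norm (\<Lambda> (r * real n) - lp) < \<delta>p" if "1 \<le> n" for n
      using near(2)[OF \<open>r1 < r\<close>] that by simp
    ultimately have "(\<lambda>k. x (int k)) \<longlonglongrightarrow> Yp"
      using near(3)[OF \<open>r1 < r\<close>]
      by (intro forward[rule_format, where m = 1 and \<mu> = "\<lambda>k. \<Lambda> (r * real k)"]) blast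
    then show "(x \<longlongrightarrow> Yp) at_top" by (rule filterlim_int_of_nat_at_topD)
  qed
qed

end
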